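(* Let $N\in\mathbb N$, $\sigma>0$, $\theta,\gamma\ge0$, let $H^N$ be a stochastic process with the dynamics described in the context and for $x>0$ let $S^N_x=\inf\{s:\Lambda^N_s(0)\ge\lfloor Nx\rfloor/N\}$. Then $S^N_x\to\infty$ almost surely as $x\to\infty$.
   Context: $H^N=(H^N_s)_{s\ge0}$ is continuous, piecewise linear with slopes $\pm2N$, starts at $0$ with slope $2N$; while moving upwards its slope jumps from $2N$ to $-2N$ at rate $N^2\sigma^2+4\gamma N\Lambda^N_s(H^N_s)$; while moving downwards its slope jumps from $-2N$ to $2N$ at rate $N^2\sigma^2+2N\theta$; whenever it reaches $0$ it is reflected above $0$. $\Lambda^N_s(t)$ is $\frac1{2N}$ times the number of $t$-crossings of $H^N$ between times $0$ and $s$, a local minimum at level $t$ counting as two crossings and a local maximum as none. *)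

theory Defs
  imports "HOL-Probability.Probability"
begin

text \<open>Pathwise construction of the piecewise linear process H^N from a sequence
 e of (i.i.d. standard exponential) clock variables.  Segment k runs from the
 turning point (T k, Y k) to (T (Suc k), Y (Suc k)); even segments go up with
 slope 2N, odd segments go down with slope -2N.\<close>

definition seg_slope :: "nat \<Rightarrow> nat \<Rightarrow> real" where
  "seg_slope N k = (if even k then 2 * real N else - 2 * real N)"

text \<open>The path made of segments 0..n, where the last segment n is continued
 indefinitely with its slope.\<close>
definition pathn :: "nat \<Rightarrow> nat \<Rightarrow> (nat \<Rightarrow> real) \<Rightarrow> (nat \<Rightarrow> real) \<Rightarrow> real \<Rightarrow> real" where
  "pathn N n T Y s =
     (let k = (if \<exists>j<n. s < T (Suc j) then (LEAST j. s < T (Suc j)) else n)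
      in Y k + seg_slope N k * (s - T k))"

text \<open>Local minima / maxima of a path on [0,\<infinity>) and the crossing weights
 (local minimum = two crossings, local maximum = none, otherwise one).\<close>
definition loc_min :: "(real \<Rightarrow> real) \<Rightarrow> real \<Rightarrow> bool" where
  "loc_min h r = (\<exists>\<epsilon>>0. \<forall>r'. 0 \<le> r' \<and> \<bar>r' - r\<bar> < \<epsilon> \<longrightarrow> h r \<le> h r')"

definition loc_max :: "(real \<Rightarrow> real) \<Rightarrow> real \<Rightarrow> bool" where
  "loc_max h r = (\<exists>\<epsilon>>0. \<forall>r'. 0 \<le> r' \<and> \<bar>r' - r\<bar> < \<epsilon> \<longrightarrow> h r' \<le> h r)"

definition cross_weight :: "(real \<Rightarrow> real) \<Rightarrow> real \<Rightarrow> real" where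
  "cross_weight h r = (if loc_min h r then 2 else if loc_max h r then 0 else 1)"

definition Lam :: "nat \<Rightarrow> (real \<Rightarrow> real) \<Rightarrow> real \<Rightarrow> real \<Rightarrow> real" where
  "Lam N h s t = (1 / (2 * real N)) * (\<Sum>r \<in> {r. 0 \<le> r \<and> r < s \<and> h r = t}. cross_weight h r)"

text \<open>Down segment: turns at rate N^2 sigma^2 + 2 N theta, or is reflected when hitting 0.\<close>
definition next_pt :: "nat \<Rightarrow> real \<Rightarrow> real \<Rightarrow> real \<Rightarrow> nat \<Rightarrow> (nat \<Rightarrow> real) \<Rightarrow> (nat \<Rightarrow> real)
    \<Rightarrow> real \<Rightarrow> real \<times> real" where
  "next_pt N \<sigma> \<theta> \<gamma> k T Y ek =
    (if even k then
       (let h = pathn N k T Y;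
            rate = (\<lambda>u. (real N)\<^sup>2 * \<sigma>\<^sup>2 + 4 * \<gamma> * real N * Lam N h (T k + u) (Y k + 2 * real N * u));
            u = Inf {u. 0 \<le> u \<and> ek \<le> integral {0..u} rate}
        in (T k + u, Y k + 2 * real N * u))
     else
       (let u = min (ek / ((real N)\<^sup>2 * \<sigma>\<^sup>2 + 2 * real N * \<theta>)) (Y k / (2 * real N))
        in (T k + u, Y k - 2 * real N * u)))"

primrec turn_pts :: "nat \<Rightarrow> real \<Rightarrow> real \<Rightarrow> real \<Rightarrow> (nat \<Rightarrow> real) \<Rightarrow> nat \<Rightarrow> (nat \<Rightarrow> real \<times> real)" where
  "turn_pts N \<sigma> \<theta> \<gamma> e 0 = (\<lambda>_. (0, 0))"
| "turn_pts N \<sigma> \<theta> \<gamma> e (Suc k) =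
     (let P = turn_pts N \<sigma> \<theta> \<gamma> e k
      in P(Suc k := next_pt N \<sigma> \<theta> \<gamma> k (fst \<circ> P) (snd \<circ> P) (e k)))"

definition Tsw :: "nat \<Rightarrow> real \<Rightarrow> real \<Rightarrow> real \<Rightarrow> (nat \<Rightarrow> real) \<Rightarrow> nat \<Rightarrow> real" where
  "Tsw N \<sigma> \<theta> \<gamma> e k = fst (turn_pts N \<sigma> \<theta> \<gamma> e k k)"

definition Ysw :: "nat \<Rightarrow> real \<Rightarrow> real \<Rightarrow> real \<Rightarrow> (nat \<Rightarrow> real) \<Rightarrow> nat \<Rightarrow> real" where
  "Ysw N \<sigma> \<theta> \<gamma> e k = snd (turn_pts N \<sigma> \<theta> \<gamma> e k k)"

text \<open>The process H^N (set to 0 after a possible explosion time).\<close>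
definition Hproc :: "nat \<Rightarrow> real \<Rightarrow> real \<Rightarrow> real \<Rightarrow> (nat \<Rightarrow> real) \<Rightarrow> real \<Rightarrow> real" where
  "Hproc N \<sigma> \<theta> \<gamma> e s =
     (if \<exists>n. s < Tsw N \<sigma> \<theta> \<gamma> e n
      then pathn N (LEAST n. s < Tsw N \<sigma> \<theta> \<gamma> e n) (Tsw N \<sigma> \<theta> \<gamma> e) (Ysw N \<sigma> \<theta> \<gamma> e) s
      else 0)"

text \<open>S^N_x = inf{s. Lambda^N_s(0) \<ge> floor(N x)/N}, in ereal (inf of empty set = \<infinity>).\<close>
definition S_hit :: "nat \<Rightarrow> real \<Rightarrow> real \<Rightarrow> real \<Rightarrow> (nat \<Rightarrow> real) \<Rightarrow> real \<Rightarrow> ereal" where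
  "S_hit N \<sigma> \<theta> \<gamma> e x =
     Inf (ereal ` {s. 0 \<le> s \<and> real_of_int \<lfloor>real N * x\<rfloor> / real N \<le> Lam N (Hproc N \<sigma> \<theta> \<gamma> e) s 0})"

end

theory Submission
  imports Defs
begin

text \<open>While going up from the k-th turning point, the path is at a generic level crossed at most
  once by each of the k earlier segments, so its turning rate is at most (N \<sigma>)^2 + 2 \<gamma> k and the
  segment lasts at least e k / ((N \<sigma>)^2 + 2 \<gamma> k). The turning times therefore dominate a weighted
  sum of the exponential clocks whose weights are not summable, and such a sum diverges almost
  surely by a Chernoff bound. Once the turning times diverge, the path has only finitely many
  zeros before any fixed time, so Lambda_s(0) stays bounded there, while the threshold of S_x tends
  to infinity with x.\<close>

section \<open>Turning points and the path\<close>

lemma turn_pts_eq_diagonal: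
  "turn_pts N \<sigma> \<theta> \<gamma> e k j = (if j \<le> k then turn_pts N \<sigma> \<theta> \<gamma> e j j else (0, 0))"
  by (induction k arbitrary: j) (auto simp: Let_def le_Suc_eq)

lemma pathn_cong:
  assumes "\<forall>j\<le>n. T j = T' j \<and> Y j = Y' j"
  shows "pathn N n T Y = pathn N n T' Y'"
proof
  fix s
  have ex: "(\<exists>j<n. s < T (Suc j)) = (\<exists>j<n. s < T' (Suc j))"
    using assms by (metis Suc_leI)
  show "pathn N n T Y s = pathn N n T' Y' s"
  proof (cases "\<exists>j<n. s < T (Suc j)")
    case True
    then obtain j0 where j0: "j0 < n" "s < T (Suc j0)" by blast
    define L where "L = (LEAST j. s < T (Suc j))"
    have L1: "s < T (Suc L)" unfolding L_def by (rule LeastI[of _ j0]) (rule j0(2))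
    have L2: "L \<le> j0" unfolding L_def by (rule Least_le) (rule j0(2))
    have Lm: "\<And>i. i < L \<Longrightarrow> \<not> s < T (Suc i)" unfolding L_def by (rule not_less_Least)
    have "(LEAST j. s < T' (Suc j)) = L"
    proof (rule Least_equality)
      show "s < T' (Suc L)" using L1 L2 j0 assms by (metis Suc_leI le_less_trans)
      show "\<And>y. s < T' (Suc y) \<Longrightarrow> L \<le> y"
        using Lm L2 j0 assms by (metis Suc_leI le_less_trans not_le_imp_less order_less_imp_le)
    qed
    moreover have "L \<le> n" using L2 j0 by simp
    ultimately show ?thesis using True ex assms unfolding pathn_def L_def[symmetric]
      by (simp add: Let_def)
  next
    case False
    then have "\<not> (\<exists>j<n. s < T' (Suc j))" using ex by simp
    then show ?thesis using False assms unfolding pathn_def by (simp only: Let_def if_False)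
  qed
qed

lemma next_pt_cong:
  assumes "\<forall>j\<le>k. T j = T' j \<and> Y j = Y' j"
  shows "next_pt N \<sigma> \<theta> \<gamma> k T Y ek = next_pt N \<sigma> \<theta> \<gamma> k T' Y' ek"
  using pathn_cong[OF assms, of N] assms unfolding next_pt_def by (simp add: Let_def)

lemma Tsw_Ysw_Suc:
  "(Tsw N \<sigma> \<theta> \<gamma> e (Suc k), Ysw N \<sigma> \<theta> \<gamma> e (Suc k)) =
     next_pt N \<sigma> \<theta> \<gamma> k (Tsw N \<sigma> \<theta> \<gamma> e) (Ysw N \<sigma> \<theta> \<gamma> e) (e k)"
proof -
  let ?P = "turn_pts N \<sigma> \<theta> \<gamma> e k"
  have "(Tsw N \<sigma> \<theta> \<gamma> e (Suc k), Ysw N \<sigma> \<theta> \<gamma> e (Suc k))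
      = next_pt N \<sigma> \<theta> \<gamma> k (fst \<circ> ?P) (snd \<circ> ?P) (e k)"
    by (simp add: Tsw_def Ysw_def Let_def)
  also have "\<dots> = next_pt N \<sigma> \<theta> \<gamma> k (Tsw N \<sigma> \<theta> \<gamma> e) (Ysw N \<sigma> \<theta> \<gamma> e) (e k)"
    by (rule next_pt_cong) (simp add: Tsw_def Ysw_def turn_pts_eq_diagonal[of N \<sigma> \<theta> \<gamma> e k])
  finally show ?thesis .
qed

lemma Tsw_0 [simp]: "Tsw N \<sigma> \<theta> \<gamma> e 0 = 0"
  and Ysw_0 [simp]: "Ysw N \<sigma> \<theta> \<gamma> e 0 = 0"
  by (simp_all add: Tsw_def Ysw_def)

lemma pathn_on_some_segment: "\<exists>k\<le>n. pathn N n T Y s = Y k + seg_slope N k * (s - T k)"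
proof (cases "\<exists>j<n. s < T (Suc j)")
  case True
  then obtain j0 where j0: "j0 < n" "s < T (Suc j0)" by blast
  have "(LEAST j. s < T (Suc j)) \<le> j0" by (rule Least_le) (rule j0(2))
  then show ?thesis using True j0 unfolding pathn_def Let_def
    by (intro exI[of _ "LEAST j. s < T (Suc j)"]) simp
next
  case False
  show ?thesis unfolding pathn_def Let_def if_not_P[OF False] by auto
qed

lemma pathn_after_last_turn:
  assumes "\<forall>j<n. T (Suc j) \<le> s"
  shows "pathn N n T Y s = Y n + seg_slope N n * (s - T n)"
proof -
  have "\<not> (\<exists>j<n. s < T (Suc j))" using assms by (meson not_le)
  then show ?thesis unfolding pathn_def Let_def by (simp only: if_False)
qed

lemma pathn_on_segment:
  assumes mono: "\<forall>j<n. T j \<le> T (Suc j)" and j: "j < n" "T j \<le> s" "s < T (Suc j)"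
  shows "pathn N n T Y s = Y j + seg_slope N j * (s - T j)"
proof -
  have L: "(LEAST i. s < T (Suc i)) = j"
  proof (rule Least_equality)
    fix i assume i: "s < T (Suc i)"
    show "j \<le> i"
    proof (rule ccontr)
      assume "\<not> j \<le> i"
      then have "T (Suc i) \<le> T j"
        using lift_Suc_mono_le_ivl[of "{..<n}" T "Suc i" j] mono j by fastforce
      then show False using i j by simp
    qed
  qed (rule j(3))
  then show ?thesis using j unfolding pathn_def Let_def by auto
qed

lemma ex_segment_containing:
  fixes T :: "nat \<Rightarrow> real"
  assumes "T 0 = 0" and s: "0 \<le> s" "s < T n"
  shows "\<exists>j<n. T j \<le> s \<and> s < T (Suc j)"
proof -
  have "n > 0" using assms by (cases n) auto
  then have w: "s < T (Suc (n - 1))" using s by simp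
  define L where "L = (LEAST i. s < T (Suc i))"
  have "s < T (Suc L)" unfolding L_def by (rule LeastI[of _ "n - 1"]) (rule w)
  moreover have "L \<le> n - 1" unfolding L_def by (rule Least_le) (rule w)
  moreover have "T L \<le> s"
  proof (cases L)
    case (Suc i)
    then show ?thesis using not_less_Least[of i "\<lambda>i. s < T (Suc i)"] by (simp add: L_def)
  qed (use assms in simp)
  ultimately show ?thesis using \<open>n > 0\<close> by (intro exI[of _ L]) auto
qed

lemma cross_weight_linear_interior:
  fixes h :: "real \<Rightarrow> real"
  assumes "0 \<le> a" "a < r" "r < b" and lin: "\<And>x. a < x \<Longrightarrow> x < b \<Longrightarrow> h x = c + m * x"
    and "m \<noteq> 0"
  shows "cross_weight h r = 1"
proof -
  have no_extremum: False
    if P: "\<And>x. 0 \<le> x \<Longrightarrow> \<bar>x - r\<bar> < \<epsilon> \<Longrightarrow> R (h r) (h x)" and "\<epsilon> > 0"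
      and R: "\<And>u v w. R u v \<Longrightarrow> R u w \<Longrightarrow> u + u = v + w \<Longrightarrow> u = v" for \<epsilon> R
  proof -
    define d where "d = min \<epsilon> (min (r - a) (b - r)) / 2"
    have d: "d > 0" "d < \<epsilon>" "d < r - a" "d < b - r" using assms that by (auto simp: d_def)
    have h: "h (r + d) = c + m * (r + d)" "h (r - d) = c + m * (r - d)" "h r = c + m * r"
      using d assms by (auto intro!: lin)
    have "R (h r) (h (r + d))" "R (h r) (h (r - d))" using d assms by (intro P; simp)+
    moreover have "h r + h r = h (r + d) + h (r - d)" using h by (simp add: algebra_simps)
    ultimately have "h r = h (r + d)" by (rule R)
    then show False using h \<open>m \<noteq> 0\<close> d by simp
  qed
  have "\<not> loc_min h r" "\<not> loc_max h r"
    unfolding loc_min_def loc_max_def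
    using no_extremum[of _ "(\<le>)"] no_extremum[of _ "(\<ge>)"] by force+
  then show ?thesis unfolding cross_weight_def by simp
qed

lemma strictly_between_iff:
  fixes y s D t :: real
  assumes "s \<noteq> 0" "0 \<le> D"
  shows "(min y (y + s * D) < t \<and> t < max y (y + s * D)) \<longleftrightarrow> 0 < (t - y) / s \<and> (t - y) / s < D"
proof (cases "s > 0")
  case True
  then show ?thesis using assms by (auto simp: field_simps min_def max_def)
next
  case False
  then have "s < 0" "s * D \<le> 0" using assms by (auto simp: mult_nonpos_nonneg)
  then show ?thesis by (auto simp: field_simps min_def max_def)
qed

text \<open>An earlier segment passing strictly through level t crosses it once, at an interior point,
  hence with weight 1; the current segment reaches t only at time T k + u, which is excluded.\<close>

lemma Lam_pathn_up_segment:
  fixes T Y :: "nat \<Rightarrow> real"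
  assumes N: "N \<ge> 1" and mono: "\<forall>j<k. T j \<le> T (Suc j)" and T0: "T 0 = 0" and ev: "even k"
    and u: "0 \<le> u" and t: "t = Y k + 2 * real N * u"
    and not_turn: "\<forall>j\<le>k. t \<noteq> Y j" "\<forall>j<k. t \<noteq> Y j + seg_slope N j * (T (Suc j) - T j)"
  shows "Lam N (pathn N k T Y) (T k + u) t =
     card {j. j < k \<and> min (Y j) (Y j + seg_slope N j * (T (Suc j) - T j)) < t
                   \<and> t < max (Y j) (Y j + seg_slope N j * (T (Suc j) - T j))} / (2 * real N)"
proof -
  define h where "h = pathn N k T Y"
  define sl where "sl = seg_slope N"
  define J where "J = {j. j < k \<and> min (Y j) (Y j + sl j * (T (Suc j) - T j)) < t
                   \<and> t < max (Y j) (Y j + sl j * (T (Suc j) - T j))}"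
  define Z where "Z = {r. 0 \<le> r \<and> r < T k + u \<and> h r = t}"
  define \<rho> where "\<rho> j = T j + (t - Y j) / sl j" for j
  have sl: "sl j \<noteq> 0" for j using N by (simp add: sl_def seg_slope_def)
  have Tle: "T i \<le> T j" if "i \<le> j" "j \<le> k" for i j
    using lift_Suc_mono_le_ivl[of "{..<k}" T i j] mono that by fastforce
  have inside: "T j < \<rho> j \<and> \<rho> j < T (Suc j)" if "j \<in> J" for j
  proof -
    have "0 \<le> T (Suc j) - T j" using mono that by (simp add: J_def)
    from strictly_between_iff[OF sl[of j] this, of "Y j" t] that
    show ?thesis by (simp add: J_def \<rho>_def)
  qed
  have h_seg: "h x = Y j + sl j * (x - T j)" if "j < k" "T j \<le> x" "x < T (Suc j)" for j x
    unfolding h_def sl_def using pathn_on_segment[OF mono that] .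
  have "Z = \<rho> ` J"
  proof (intro equalityI subsetI)
    fix r assume "r \<in> \<rho> ` J"
    then obtain j where j: "j \<in> J" "r = \<rho> j" by blast
    have "j < k" using j by (simp add: J_def)
    then have "0 \<le> T j" "T (Suc j) \<le> T k" using Tle[of 0 j] Tle[of "Suc j" k] T0 by auto
    moreover have "h r = t" using h_seg[of j r] inside[OF j(1)] j sl[of j] \<open>j < k\<close>
      by (simp add: \<rho>_def)
    moreover have "T j < r" "r < T (Suc j)" using inside[OF j(1)] j(2) by auto
    ultimately show "r \<in> Z" using u unfolding Z_def by simp
  next
    fix r assume r: "r \<in> Z"
    show "r \<in> \<rho> ` J"
    proof (cases "T k \<le> r")
      case True
      then have "\<forall>j<k. T (Suc j) \<le> r" using Tle[of "Suc _" k] by (meson Suc_leI order.refl order_trans)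
      then have "h r = Y k + 2 * real N * (r - T k)"
        using ev pathn_after_last_turn unfolding h_def by (simp add: seg_slope_def)
      then have "r = T k + u" using r t N by (auto simp: Z_def)
      then show ?thesis using r by (simp add: Z_def)
    next
      case False
      then obtain j where j: "j < k" "T j \<le> r" "r < T (Suc j)"
        using ex_segment_containing[of T r k] T0 r by (auto simp: Z_def)
      have tr: "t = Y j + sl j * (r - T j)" using h_seg[OF j] r by (simp add: Z_def)
      then have "(t - Y j) / sl j = r - T j" using sl[of j] by simp
      moreover have "t \<noteq> Y j" using not_turn j by simp
      then have "T j < r" using tr j(2) by force
      moreover have "0 \<le> T (Suc j) - T j" using mono j by simp
      ultimately have "j \<in> J"
        using strictly_between_iff[OF sl[of j], of "T (Suc j) - T j" "Y j" t] j
        by (simp add: J_def)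
      moreover have "r = \<rho> j" using \<open>(t - Y j) / sl j = r - T j\<close> by (simp add: \<rho>_def)
      ultimately show ?thesis by blast
    qed
  qed
  moreover have "inj_on \<rho> J"
  proof (rule linorder_inj_onI')
    fix i j assume "i \<in> J" "j \<in> J" "i < j"
    then have "T (Suc i) \<le> T j" using Tle[of "Suc i" j] by (simp add: J_def)
    then show "\<rho> i \<noteq> \<rho> j" using inside[OF \<open>i \<in> J\<close>] inside[OF \<open>j \<in> J\<close>] by linarith
  qed
  ultimately have card: "card Z = card J" by (simp add: card_image)
  have "cross_weight h r = 1" if r: "r \<in> Z" for r
  proof -
    obtain j where j: "j \<in> J" "r = \<rho> j" using \<open>Z = \<rho> ` J\<close> r by blast
    then have "j < k" by (simp add: J_def)
    show ?thesis
    proof (rule cross_weight_linear_interior)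
      show "0 \<le> T j" using Tle[of 0 j] T0 \<open>j < k\<close> by simp
      show "T j < r" "r < T (Suc j)" using inside[OF j(1)] j by auto
      show "\<And>x. T j < x \<Longrightarrow> x < T (Suc j) \<Longrightarrow> h x = (Y j - sl j * T j) + sl j * x"
        using h_seg[OF \<open>j < k\<close>] by (simp add: algebra_simps)
    qed (rule sl)
  qed
  then have "Lam N h (T k + u) t = card Z / (2 * real N)"
    by (simp add: Lam_def Z_def)
  then show ?thesis using card by (simp add: h_def J_def sl_def)
qed

section \<open>Duration of an up segment\<close>

text \<open>The rate of an up segment agrees, up to finitely many points, with a step function
  between (N \<sigma>)^2 and (N \<sigma>)^2 + 2 \<gamma> k; this gives integrability and both bounds.\<close>

lemma up_rate_integral_bounds:
  fixes T Y :: "nat \<Rightarrow> real" and \<sigma> :: real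
  assumes N: "N \<ge> 1" and mono: "\<forall>j<k. T j \<le> T (Suc j)" and T0: "T 0 = 0" and ev: "even k"
    and \<gamma>: "\<gamma> \<ge> 0" and v: "0 \<le> v"
  defines "rate \<equiv> \<lambda>u. (real N)\<^sup>2 * \<sigma>\<^sup>2 + 4 * \<gamma> * real N * Lam N (pathn N k T Y) (T k + u) (Y k + 2 * real N * u)"
  shows "(real N)\<^sup>2 * \<sigma>\<^sup>2 * v \<le> integral {0..v} rate"
    and "integral {0..v} rate \<le> ((real N)\<^sup>2 * \<sigma>\<^sup>2 + 2 * \<gamma> * real k) * v"
proof -
  define A where "A = (real N)\<^sup>2 * \<sigma>\<^sup>2"
  define eY where "eY j = Y j + seg_slope N j * (T (Suc j) - T j)" for j
  define a where "a j = (min (Y j) (eY j) - Y k) / (2 * real N)" for j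
  define b where "b j = (max (Y j) (eY j) - Y k) / (2 * real N)" for j
  define g where "g u = A + 2 * \<gamma> * (\<Sum>j<k. indicat_real {a j<..<b j} u)" for u :: real
  define F where "F = (\<lambda>y. (y - Y k) / (2 * real N)) ` (Y ` {..k} \<union> eY ` {..<k})"
  have Npos: "real N > 0" using N by simp
  have level_iff: "(min (Y j) (eY j) < Y k + 2 * real N * u \<and> Y k + 2 * real N * u < max (Y j) (eY j))
      \<longleftrightarrow> u \<in> {a j<..<b j}" for j u
    using Npos by (auto simp: a_def b_def field_simps)
  have rate_eq_g: "rate u = g u" if u: "u \<in> {0..v} - F" for u
  proof -
    have level_in_F: "u \<in> F" if "Y k + 2 * real N * u = y" "y \<in> Y ` {..k} \<union> eY ` {..<k}" for y
      using that Npos unfolding F_def by (intro image_eqI[of _ _ y]) (auto simp: field_simps)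
    have not_turn: "Y k + 2 * real N * u \<noteq> y" if "y \<in> Y ` {..k} \<union> eY ` {..<k}" for y
      using level_in_F[OF _ that] u by blast
    have "0 \<le> u" using u by simp
    moreover have "\<forall>j\<le>k. Y k + 2 * real N * u \<noteq> Y j" "\<forall>j<k. Y k + 2 * real N * u \<noteq> eY j"
      using not_turn by auto
    ultimately have "Lam N (pathn N k T Y) (T k + u) (Y k + 2 * real N * u) =
      card {j. j < k \<and> min (Y j) (eY j) < Y k + 2 * real N * u \<and> Y k + 2 * real N * u < max (Y j) (eY j)}
        / (2 * real N)"
      unfolding eY_def by (rule Lam_pathn_up_segment[OF N mono T0 ev _ refl])
    also have "{j. j < k \<and> min (Y j) (eY j) < Y k + 2 * real N * u \<and> Y k + 2 * real N * u < max (Y j) (eY j)}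
        = {j \<in> {..<k}. u \<in> {a j<..<b j}}"
      by (simp only: level_iff lessThan_iff mem_Collect_eq)
    also have "real (card \<dots>) = (\<Sum>j<k. indicat_real {a j<..<b j} u)"
      by (simp add: sum.inter_filter[symmetric] indicator_def Int_def conj_commute)
    finally show ?thesis using Npos by (simp add: rate_def g_def A_def field_simps)
  qed
  have "indicat_real {a j<..<b j} integrable_on {0..v}" for j
    unfolding integrable_on_indicator by (rule bounded_set_imp_lmeasurable) auto
  then have g_int: "g integrable_on {0..v}"
    unfolding g_def by (intro integrable_add integrable_on_mult_right integrable_sum) auto
  have "(rate has_integral integral {0..v} g) {0..v}"
    by (rule has_integral_spike_finite[of F, OF _ rate_eq_g integrable_integral[OF g_int]])
      (simp add: F_def)
  then have rate_g: "integral {0..v} rate = integral {0..v} g" by (rule integral_unique)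
  have "A \<le> g u" for u
    using \<gamma> by (simp add: g_def sum_nonneg)
  then have "integral {0..v} (\<lambda>_. A) \<le> integral {0..v} g"
    by (intro integral_le[OF integrable_const_ivl g_int])
  then show "(real N)\<^sup>2 * \<sigma>\<^sup>2 * v \<le> integral {0..v} rate"
    using v by (simp add: rate_g A_def algebra_simps)
  have "(\<Sum>j<k. indicat_real {a j<..<b j} u) \<le> real k" for u :: real
    using sum_mono[of "{..<k}" "\<lambda>j. indicat_real {a j<..<b j} u" "\<lambda>_. 1 :: real"]
    by (simp add: indicator_def)
  then have "g u \<le> A + 2 * \<gamma> * real k" for u
    using \<gamma> by (simp add: g_def mult_left_mono)
  then have "integral {0..v} g \<le> integral {0..v} (\<lambda>_. A + 2 * \<gamma> * real k)"
    by (intro integral_le[OF g_int integrable_const_ivl])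
  then show "integral {0..v} rate \<le> ((real N)\<^sup>2 * \<sigma>\<^sup>2 + 2 * \<gamma> * real k) * v"
    using v by (simp add: rate_g A_def algebra_simps)
qed

lemma up_duration_ge:
  fixes T Y :: "nat \<Rightarrow> real"
  assumes N: "N \<ge> 1" and mono: "\<forall>j<k. T j \<le> T (Suc j)" and T0: "T 0 = 0" and ev: "even k"
    and \<sigma>: "\<sigma> > 0" and \<gamma>: "\<gamma> \<ge> 0" and e: "0 \<le> e"
  shows "e / ((real N)\<^sup>2 * \<sigma>\<^sup>2 + 2 * \<gamma> * real k) \<le> Inf {u. 0 \<le> u \<and> e \<le> integral {0..u}
     (\<lambda>u. (real N)\<^sup>2 * \<sigma>\<^sup>2 + 4 * \<gamma> * real N * Lam N (pathn N k T Y) (T k + u) (Y k + 2 * real N * u))}"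
    (is "e / ?C \<le> Inf ?W")
proof (rule cInf_greatest)
  have A: "(real N)\<^sup>2 * \<sigma>\<^sup>2 > 0" using N \<sigma> by simp
  define v where "v = e / ((real N)\<^sup>2 * \<sigma>\<^sup>2)"
  have "0 \<le> v" "(real N)\<^sup>2 * \<sigma>\<^sup>2 * v = e" using N \<sigma> e by (simp_all add: v_def)
  then have "v \<in> ?W"
    using up_rate_integral_bounds(1)[OF N mono T0 ev \<gamma>, where v = v and Y = Y and \<sigma> = \<sigma>] by simp
  then show "?W \<noteq> {}" by blast
  fix u assume "u \<in> ?W"
  then have "e \<le> ?C * u"
    using up_rate_integral_bounds(2)[OF N mono T0 ev \<gamma>, where v = u and Y = Y and \<sigma> = \<sigma>] by simp
  moreover have "?C > 0" using A \<gamma> by (simp add: add_pos_nonneg)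
  ultimately show "e / ?C \<le> u" by (simp add: divide_le_eq mult.commute)
qed

lemma turning_points_invariant:
  assumes N: "N \<ge> 1" and \<sigma>: "\<sigma> > 0" and \<theta>: "\<theta> \<ge> 0" and \<gamma>: "\<gamma> \<ge> 0" and e: "\<forall>k. 0 \<le> e k"
  shows "(\<forall>j<k. Tsw N \<sigma> \<theta> \<gamma> e j \<le> Tsw N \<sigma> \<theta> \<gamma> e (Suc j) \<and>
           (even j \<longrightarrow> Tsw N \<sigma> \<theta> \<gamma> e j + e j / ((real N)\<^sup>2 * \<sigma>\<^sup>2 + 2 * \<gamma> * real j)
                          \<le> Tsw N \<sigma> \<theta> \<gamma> e (Suc j)))
         \<and> 0 \<le> Ysw N \<sigma> \<theta> \<gamma> e k"
proof (induction k)
  case (Suc k)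
  define T where "T = Tsw N \<sigma> \<theta> \<gamma> e"
  define Y where "Y = Ysw N \<sigma> \<theta> \<gamma> e"
  have IH: "\<forall>j<k. T j \<le> T (Suc j)" "0 \<le> Y k" using Suc.IH by (auto simp: T_def Y_def)
  have step: "(T (Suc k), Y (Suc k)) = next_pt N \<sigma> \<theta> \<gamma> k T Y (e k)"
    unfolding T_def Y_def by (rule Tsw_Ysw_Suc)
  have "T k \<le> T (Suc k) \<and>
     (even k \<longrightarrow> T k + e k / ((real N)\<^sup>2 * \<sigma>\<^sup>2 + 2 * \<gamma> * real k) \<le> T (Suc k)) \<and> 0 \<le> Y (Suc k)"
  proof (cases "even k")
    case True
    define w where "w = Inf {u. 0 \<le> u \<and> e k \<le> integral {0..u}
     (\<lambda>u. (real N)\<^sup>2 * \<sigma>\<^sup>2 + 4 * \<gamma> * real N * Lam N (pathn N k T Y) (T k + u) (Y k + 2 * real N * u))}"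
    have "e k / ((real N)\<^sup>2 * \<sigma>\<^sup>2 + 2 * \<gamma> * real k) \<le> w"
      unfolding w_def using e by (intro up_duration_ge[OF N IH(1) _ True \<sigma> \<gamma>]) (simp_all add: T_def)
    moreover have "0 \<le> e k / ((real N)\<^sup>2 * \<sigma>\<^sup>2 + 2 * \<gamma> * real k)" using e \<gamma> by simp
    moreover have "(T (Suc k), Y (Suc k)) = (T k + w, Y k + 2 * real N * w)"
      unfolding step next_pt_def w_def using True by (simp add: Let_def)
    ultimately show ?thesis using True IH(2) by simp
  next
    case False
    define w where "w = min (e k / ((real N)\<^sup>2 * \<sigma>\<^sup>2 + 2 * real N * \<theta>)) (Y k / (2 * real N))"
    have "0 < (real N)\<^sup>2 * \<sigma>\<^sup>2 + 2 * real N * \<theta>" using N \<sigma> \<theta> by (simp add: add_pos_nonneg)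
    then have "0 \<le> w" using e IH(2) by (simp add: w_def)
    moreover have "2 * real N * w \<le> Y k" using N by (simp add: w_def min_def field_simps)
    moreover have "(T (Suc k), Y (Suc k)) = (T k + w, Y k - 2 * real N * w)"
      unfolding step next_pt_def w_def using False by (simp add: Let_def)
    ultimately show ?thesis using False by simp
  qed
  then show ?case using Suc.IH by (auto simp: T_def Y_def less_Suc_eq)
qed simp

text \<open>The duration bound e k / ((N \<sigma>)^2 + 2 \<gamma> k) of up segments, with the weight capped at 1
  for the Chernoff bound below.\<close>

definition clock_weight :: "nat \<Rightarrow> real \<Rightarrow> real \<Rightarrow> nat \<Rightarrow> real" where
  "clock_weight N \<sigma> \<gamma> k = (if even k then 1 / (max 1 ((real N)\<^sup>2 * \<sigma>\<^sup>2) + 2 * \<gamma> * real k) else 0)"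

lemma clock_weight_nonneg: "\<gamma> \<ge> 0 \<Longrightarrow> 0 \<le> clock_weight N \<sigma> \<gamma> k"
  and clock_weight_le_1: "\<gamma> \<ge> 0 \<Longrightarrow> clock_weight N \<sigma> \<gamma> k \<le> 1"
proof -
  assume "\<gamma> \<ge> 0"
  then have "1 \<le> max 1 ((real N)\<^sup>2 * \<sigma>\<^sup>2) + 2 * \<gamma> * real k" by (simp add: add_increasing2)
  then show "0 \<le> clock_weight N \<sigma> \<gamma> k" "clock_weight N \<sigma> \<gamma> k \<le> 1"
    by (auto simp: clock_weight_def)
qed

lemma Tsw_ge_weighted_clock_sum:
  assumes "N \<ge> 1" "\<sigma> > 0" "\<theta> \<ge> 0" "\<gamma> \<ge> 0" "\<forall>k. 0 \<le> e k"
  shows "(\<Sum>k<n. clock_weight N \<sigma> \<gamma> k * e k) \<le> Tsw N \<sigma> \<theta> \<gamma> e n"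
proof (induction n)
  case (Suc n)
  have "clock_weight N \<sigma> \<gamma> n * e n \<le> e n / ((real N)\<^sup>2 * \<sigma>\<^sup>2 + 2 * \<gamma> * real n)" if "even n"
  proof -
    have "0 < (real N)\<^sup>2 * \<sigma>\<^sup>2 + 2 * \<gamma> * real n" using assms by (simp add: add_pos_nonneg)
    then show ?thesis using that assms(5) by (simp add: clock_weight_def) (intro frac_le; simp)
  qed
  then show ?case using Suc turning_points_invariant[OF assms, of "Suc n"]
    by (auto simp: clock_weight_def)
qed simp

section \<open>Local time at zero\<close>

lemma Lam_le_card:
  assumes "finite Z" and "{r. 0 \<le> r \<and> r < s \<and> h r = t} \<subseteq> Z"
  shows "Lam N h s t \<le> card Z / real N"
proof -
  let ?Zs = "{r. 0 \<le> r \<and> r < s \<and> h r = t}"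
  have "(\<Sum>r\<in>?Zs. cross_weight h r) \<le> (\<Sum>r\<in>?Zs. 2)"
    by (intro sum_mono) (simp add: cross_weight_def)
  also have "\<dots> \<le> 2 * real (card Z)"
    using card_mono[OF assms] by simp
  finally show ?thesis
    unfolding Lam_def by (cases "N = 0") (simp_all add: field_simps)
qed

lemma Hproc_zero_before_Tsw:
  assumes N: "N \<ge> 1" and "s < Tsw N \<sigma> \<theta> \<gamma> e n" and "Hproc N \<sigma> \<theta> \<gamma> e s = 0"
  shows "s \<in> (\<lambda>k. Tsw N \<sigma> \<theta> \<gamma> e k - Ysw N \<sigma> \<theta> \<gamma> e k / seg_slope N k) ` {..n}"
proof -
  define T where "T = Tsw N \<sigma> \<theta> \<gamma> e"
  define Y where "Y = Ysw N \<sigma> \<theta> \<gamma> e"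
  define m where "m = (LEAST n. s < T n)"
  have "\<exists>n. s < T n" using assms by (auto simp: T_def)
  then have "pathn N m T Y s = 0" using assms unfolding Hproc_def m_def T_def Y_def by simp
  moreover have "m \<le> n" unfolding m_def using assms by (intro Least_le) (simp add: T_def)
  moreover obtain k where "k \<le> m" "pathn N m T Y s = Y k + seg_slope N k * (s - T k)"
    using pathn_on_some_segment by blast
  moreover have "seg_slope N k \<noteq> 0" using N by (simp add: seg_slope_def)
  ultimately have "s = T k - Y k / seg_slope N k" and "k \<le> n" by (simp_all add: field_simps)
  then show ?thesis unfolding T_def Y_def by auto
qed

lemma S_hit_tendsto_infinity:
  assumes N: "N \<ge> 1" and lim: "filterlim (Tsw N \<sigma> \<theta> \<gamma> e) at_top sequentially"
  shows "((\<lambda>x. S_hit N \<sigma> \<theta> \<gamma> e x) \<longlongrightarrow> \<infinity>) at_top"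
  unfolding tendsto_PInfty
proof
  fix r :: real
  define B where "B = max r 0 + 1"
  obtain n where n: "B \<le> Tsw N \<sigma> \<theta> \<gamma> e n"
    using lim unfolding filterlim_at_top by (metis eventually_sequentially order_refl)
  define Z where "Z = (\<lambda>k. Tsw N \<sigma> \<theta> \<gamma> e k - Ysw N \<sigma> \<theta> \<gamma> e k / seg_slope N k) ` {..n}"
  define K where "K = card Z"
  have Lam_bounded: "Lam N (Hproc N \<sigma> \<theta> \<gamma> e) s 0 \<le> K / real N" if "s \<le> B" for s
    unfolding K_def using that n Hproc_zero_before_Tsw[OF N, of _ \<sigma> \<theta> \<gamma> e n]
    by (intro Lam_le_card) (auto simp: Z_def)
  show "\<forall>\<^sub>F x in at_top. ereal r < S_hit N \<sigma> \<theta> \<gamma> e x"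
    using eventually_ge_at_top[of "real K + 1"]
  proof eventually_elim
    fix x :: real assume x: "real K + 1 \<le> x"
    have "real K + 1 \<le> real N * x" using x N
      by (smt (verit) mult_le_cancel_right1 of_nat_0_le_iff of_nat_1 of_nat_mono)
    then have "int K + 1 \<le> \<lfloor>real N * x\<rfloor>" by (simp add: le_floor_iff)
    then have above: "K / real N < real_of_int \<lfloor>real N * x\<rfloor> / real N"
      using N by (simp add: divide_strict_right_mono)
    have "ereal B \<le> S_hit N \<sigma> \<theta> \<gamma> e x"
      unfolding S_hit_def
    proof (rule Inf_greatest, clarify)
      fix s assume "real_of_int \<lfloor>real N * x\<rfloor> / real N \<le> Lam N (Hproc N \<sigma> \<theta> \<gamma> e) s 0"
      then have "\<not> s \<le> B" using Lam_bounded above by fastforce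
      then show "ereal B \<le> ereal s" by simp
    qed
    then show "ereal r < S_hit N \<sigma> \<theta> \<gamma> e x"
      by (rule less_le_trans[rotated]) (simp add: B_def)
  qed
qed

section \<open>Weighted sums of exponential clocks\<close>

lemma exp_neg_le_one_minus_indicator:
  fixes c x :: real
  assumes c: "0 \<le> c" "c \<le> 1"
  shows "exp (- c * max 0 x) \<le> 1 - c / 2 * indicator {1<..} x"
proof (cases "1 < x")
  case True
  have "1 + c \<le> 1 + c * x" using mult_left_mono[of 1 x c] True c by simp
  also have "\<dots> \<le> exp (c * x)" by (rule exp_ge_add_one_self)
  finally have "inverse (exp (c * x)) \<le> inverse (1 + c)" using c by (intro le_imp_inverse_le) auto
  also have "\<dots> \<le> 1 - c / 2"
    using c by (simp add: field_simps) (simp add: algebra_simps power2_eq_square mult_left_le)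
  finally show ?thesis using True by (simp add: exp_minus)
next
  case False
  then show ?thesis using c by (simp add: mult_nonneg_nonneg)
qed

context prob_space
begin

lemma AE_exponential_pos:
  assumes "distributed M lborel X (exponential_density 1)"
  shows "AE \<omega> in M. 0 < X \<omega>"
proof -
  have "prob {\<omega> \<in> space M. 0 < X \<omega>} = 1"
    using exponential_distributedD_gt[OF assms, of 0] by simp
  from AE_prob_1[OF this] show ?thesis by eventually_elim simp
qed

lemma expectation_exp_neg_exponential_le:
  assumes X: "distributed M lborel X (exponential_density 1)" and c: "0 \<le> c" "c \<le> 1"
  shows "expectation (\<lambda>\<omega>. exp (- c * max 0 (X \<omega>))) \<le> exp (- c * exp (- 1) / 2)"
proof -
  have [measurable]: "X \<in> borel_measurable M" using distributed_measurable[OF X] by simp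
  define A where "A = {\<omega> \<in> space M. 1 < X \<omega>}"
  have A: "A \<in> events" "prob A = exp (- 1)"
    using exponential_distributedD_gt[OF X, of 1] unfolding A_def by simp_all
  have "expectation (\<lambda>\<omega>. exp (- c * max 0 (X \<omega>))) \<le> expectation (\<lambda>\<omega>. 1 - c / 2 * indicator A \<omega>)"
  proof (rule integral_mono)
    show "integrable M (\<lambda>\<omega>. exp (- c * max 0 (X \<omega>)))"
      using c by (intro integrable_const_bound[where B = 1]) (auto simp: mult_nonneg_nonneg)
    show "integrable M (\<lambda>\<omega>. 1 - c / 2 * indicator A \<omega>)"
      using A(1) by (intro Bochner_Integration.integrable_diff integrable_mult_right)
        (auto intro: integrable_real_indicator simp: emeasure_eq_measure)
    show "exp (- c * max 0 (X \<omega>)) \<le> 1 - c / 2 * indicator A \<omega>" if "\<omega> \<in> space M" for \<omega>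
      using exp_neg_le_one_minus_indicator[OF c, of "X \<omega>"] that by (simp add: A_def indicator_def)
  qed
  also have "\<dots> = 1 - c / 2 * exp (- 1)"
    using A by (simp add: prob_space emeasure_eq_measure)
  also have "\<dots> \<le> exp (- c * exp (- 1) / 2)"
    using exp_ge_add_one_self[of "- c * exp (- 1) / 2"] by simp
  finally show ?thesis .
qed

text \<open>Chernoff bound: by independence the Laplace transform of a partial sum factorizes, and
  each factor is at most exp (- c k / (2 e)).\<close>

lemma AE_weighted_exponential_sum_at_top:
  fixes E :: "nat \<Rightarrow> 'a \<Rightarrow> real" and c :: "nat \<Rightarrow> real"
  assumes indep: "indep_vars (\<lambda>_. borel) E UNIV"
    and exp: "\<And>k. distributed M lborel (E k) (exponential_density 1)"
    and c0: "\<And>k. 0 \<le> c k" and c1: "\<And>k. c k \<le> 1"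
    and div: "filterlim (\<lambda>n. \<Sum>k<n. c k) at_top sequentially"
  shows "AE \<omega> in M. filterlim (\<lambda>n. \<Sum>k<n. c k * E k \<omega>) at_top sequentially"
proof -
  have [measurable]: "E k \<in> borel_measurable M" for k
    using distributed_measurable[OF exp[of k]] by simp
  define p :: real where "p = exp (- 1) / 2"
  define F where "F k \<omega> = exp (- c k * max 0 (E k \<omega>))" for k \<omega>
  have [measurable]: "F k \<in> borel_measurable M" for k unfolding F_def by measurable
  have F01: "0 \<le> F k \<omega>" "F k \<omega> \<le> 1" for k \<omega>
    using c0[of k] by (auto simp: F_def mult_nonneg_nonneg)
  have prod_F_int: "integrable M (\<lambda>\<omega>. \<Prod>k\<in>K. F k \<omega>)" for K
    using F01 by (intro integrable_const_bound[where B = 1]) (auto simp: prod_nonneg prod_le_1)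
  have "indep_vars (\<lambda>_. borel) (\<lambda>k \<omega>. (\<lambda>k x. exp (- c k * max 0 x)) k (E k \<omega>)) UNIV"
    by (rule indep_vars_compose2[OF indep]) measurable
  then have indepF: "indep_vars (\<lambda>_. borel) F UNIV" by (simp add: F_def[abs_def])
  have prod_bound: "expectation (\<lambda>\<omega>. \<Prod>k<n. F k \<omega>) \<le> exp (- (p * (\<Sum>k<n. c k)))" for n
  proof -
    have "expectation (\<lambda>\<omega>. \<Prod>k<n. F k \<omega>) = (\<Prod>k<n. expectation (F k))"
      using prod_F_int[of "{_}"]
      by (intro indep_vars_lebesgue_integral) (auto intro: indep_vars_subset[OF indepF])
    also have "\<dots> \<le> (\<Prod>k<n. exp (- (p * c k)))"
    proof (intro prod_mono conjI)
      fix k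
      show "0 \<le> expectation (F k)" using F01 by (simp add: integral_nonneg)
      show "expectation (F k) \<le> exp (- (p * c k))"
        using expectation_exp_neg_exponential_le[OF exp c0 c1, of k k]
        by (simp add: F_def[abs_def] p_def mult.commute)
    qed
    also have "\<dots> = exp (- (p * (\<Sum>k<n. c k)))"
      by (simp add: exp_sum[symmetric] sum_negf sum_distrib_left)
    finally show ?thesis .
  qed
  have "AE \<omega> in M. \<exists>n. real m < (\<Sum>k<n. c k * max 0 (E k \<omega>))" for m :: nat
  proof -
    define B where "B = {\<omega> \<in> space M. \<forall>n. (\<Sum>k<n. c k * max 0 (E k \<omega>)) \<le> real m}"
    have [measurable]: "B \<in> events" unfolding B_def by measurable
    have bound: "prob B \<le> exp (real m) * exp (- (p * (\<Sum>k<n. c k)))" for n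
    proof -
      have "B \<subseteq> {\<omega> \<in> space M. exp (- real m) \<le> (\<Prod>k<n. F k \<omega>)}"
        by (auto simp: B_def F_def exp_sum[symmetric] sum_negf)
      then have "prob B \<le> prob {\<omega> \<in> space M. exp (- real m) \<le> (\<Prod>k<n. F k \<omega>)}"
        by (intro finite_measure_mono) measurable
      also have "\<dots> \<le> expectation (\<lambda>\<omega>. \<Prod>k<n. F k \<omega>) / exp (- real m)"
        using F01 by (intro integral_Markov_inequality_measure[OF prod_F_int sets.top])
          (auto simp: prod_nonneg)
      also have "\<dots> \<le> exp (real m) * exp (- (p * (\<Sum>k<n. c k)))"
        using prod_bound[of n] by (simp add: exp_minus field_simps)
      finally show ?thesis .
    qed
    have lim: "(\<lambda>n. exp (real m) * exp (- (p * (\<Sum>k<n. c k)))) \<longlonglongrightarrow> 0"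
      by (intro tendsto_mult_right_zero filterlim_compose[OF exp_at_bot]
          filterlim_uminus_at_top[THEN iffD1] filterlim_tendsto_pos_mult_at_top[OF tendsto_const _ div])
        (simp add: p_def)
    have "prob B \<le> 0"
      by (rule tendsto_le[OF sequentially_bot lim tendsto_const]) (intro always_eventually allI bound)
    then have "AE \<omega> in M. \<omega> \<notin> B"
      using prob_eq_0[of B] by (simp add: measure_le_0_iff)
    with AE_space show ?thesis by eventually_elim (auto simp: B_def not_le)
  qed
  then have "AE \<omega> in M. \<forall>m::nat. \<exists>n. real m < (\<Sum>k<n. c k * max 0 (E k \<omega>))"
    by (simp add: AE_all_countable)
  moreover have "AE \<omega> in M. \<forall>k. 0 < E k \<omega>"
    using AE_exponential_pos[OF exp] by (simp add: AE_all_countable)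
  ultimately show ?thesis
  proof eventually_elim
    case (elim \<omega>)
    then have unbounded: "\<forall>m::nat. \<exists>n. real m < (\<Sum>k<n. c k * E k \<omega>)" by simp
    have inc: "incseq (\<lambda>n. \<Sum>k<n. c k * E k \<omega>)"
      using elim c0 by (intro incseq_SucI) (simp add: less_imp_le)
    show ?case
      unfolding filterlim_at_top eventually_sequentially
    proof
      fix z :: real
      obtain n where n: "real (nat \<lceil>z\<rceil>) < (\<Sum>k<n. c k * E k \<omega>)" using unbounded by blast
      have "z \<le> (\<Sum>k<n'. c k * E k \<omega>)" if "n \<le> n'" for n'
        using real_nat_ceiling_ge[of z] n incseqD[OF inc that] by linarith
      then show "\<exists>n. \<forall>n'\<ge>n. z \<le> (\<Sum>k<n'. c k * E k \<omega>)" by blast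
    qed
  qed
qed

end

lemma even_reciprocal_sums_at_top:
  fixes a b :: real
  assumes a: "a > 0" and b: "b \<ge> 0"
  shows "filterlim (\<lambda>n. \<Sum>k<n. if even k then 1 / (a + b * real k) else 0) at_top sequentially"
proof -
  define c where "c k = (if even k then 1 / (a + b * real k) else 0)" for k
  have c0: "0 \<le> c k" for k using a b by (simp add: c_def)
  have harm_le: "harm n / (a + 2 * b) \<le> (\<Sum>k<2 * n. c k)" for n
  proof -
    have "harm n / (a + 2 * b) = (\<Sum>i<n. 1 / ((a + 2 * b) * (real i + 1)))"
      by (simp add: harm_altdef sum_divide_distrib field_simps)
    also have "\<dots> \<le> (\<Sum>i<n. c (2 * i))"
    proof (rule sum_mono)
      fix i
      have "a + b * real (2 * i) \<le> (a + 2 * b) * (real i + 1)"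
        using a b by (simp add: algebra_simps)
      then show "1 / ((a + 2 * b) * (real i + 1)) \<le> c (2 * i)"
        using a b by (simp add: c_def) (intro frac_le; simp add: add_pos_nonneg)
    qed
    also have "\<dots> = sum c ((\<lambda>i. 2 * i) ` {..<n})"
      by (simp add: sum.reindex inj_on_def)
    also have "\<dots> \<le> (\<Sum>k<2 * n. c k)"
      using c0 by (intro sum_mono2) auto
    finally show ?thesis .
  qed
  have "incseq (\<lambda>n. \<Sum>k<n. c k)"
    using c0 by (intro incseq_SucI) simp
  show ?thesis
    unfolding c_def[symmetric] filterlim_at_top eventually_sequentially
  proof
    fix z
    obtain n where n: "(a + 2 * b) * z \<le> harm n"
      using harm_at_top unfolding filterlim_at_top eventually_sequentially by blast
    then have "z \<le> harm n / (a + 2 * b)" using a b by (simp add: field_simps)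
    then have "z \<le> (\<Sum>k<n'. c k)" if "2 * n \<le> n'" for n'
      using harm_le[of n] incseqD[OF \<open>incseq _\<close> that] by linarith
    then show "\<exists>n. \<forall>n'\<ge>n. z \<le> (\<Sum>k<n'. c k)" by blast
  qed
qed

lemma clock_weight_sums_at_top:
  assumes "\<gamma> \<ge> 0"
  shows "filterlim (\<lambda>n. \<Sum>k<n. clock_weight N \<sigma> \<gamma> k) at_top sequentially"
  using even_reciprocal_sums_at_top[of "max 1 ((real N)\<^sup>2 * \<sigma>\<^sup>2)" "2 * \<gamma>"] assms
  by (simp add: clock_weight_def mult.assoc)

theorem lemma4:
  fixes M :: "'a measure" and E :: "nat \<Rightarrow> 'a \<Rightarrow> real"
    and N :: nat and \<sigma> \<theta> \<gamma> :: real
  assumes "prob_space M"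
    and "N \<ge> 1" and "\<sigma> > 0" and "\<theta> \<ge> 0" and "\<gamma> \<ge> 0"
    and "prob_space.indep_vars M (\<lambda>_. borel) E UNIV"
    and "\<And>k. distributed M lborel (E k) (exponential_density 1)"
  shows "AE \<omega> in M. filterlim (Tsw N \<sigma> \<theta> \<gamma> (\<lambda>k. E k \<omega>)) at_top sequentially
                  \<and> ((\<lambda>x. S_hit N \<sigma> \<theta> \<gamma> (\<lambda>k. E k \<omega>) x) \<longlongrightarrow> \<infinity>) at_top"
proof -
  interpret prob_space M by fact
  have "AE \<omega> in M. filterlim (\<lambda>n. \<Sum>k<n. clock_weight N \<sigma> \<gamma> k * E k \<omega>) at_top sequentially"
    using assms(5-7) clock_weight_nonneg clock_weight_le_1 clock_weight_sums_at_top
    by (intro AE_weighted_exponential_sum_at_top)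
  moreover have "AE \<omega> in M. \<forall>k. 0 < E k \<omega>"
    using AE_exponential_pos[OF assms(7)] by (simp add: AE_all_countable)
  ultimately show ?thesis
  proof eventually_elim
    case (elim \<omega>)
    then have "\<forall>k. 0 \<le> E k \<omega>" by (simp add: less_imp_le)
    then have "filterlim (Tsw N \<sigma> \<theta> \<gamma> (\<lambda>k. E k \<omega>)) at_top sequentially"
      using Tsw_ge_weighted_clock_sum[OF assms(2-5)]
      by (intro filterlim_at_top_mono[OF elim(1) always_eventually] allI)
    then show ?case using S_hit_tendsto_infinity[OF \<open>N \<ge> 1\<close>] by blast
  qed
qed

end
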